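(* Assume $\delta>d$. Then the limit $$G_f^\alpha(z,w)=\lim_{n\to\infty}\frac{1}{\delta^n}\log^+\max\{|p^n(z)|^\alpha,\,|Q_z^n(w)|\}$$ exists for every $(z,w)\in\mathbb{C}^2$ and equals $\alpha G_p(z)$.
   Context: Let $p(z)=z^\delta+O(z^{\delta-1})$ be a monic polynomial of degree $\delta\ge 2$, and let $q(z,w)=b(z)w^d+(\text{terms of lower degree in } w)$ be a polynomial with $d=\deg_w q\ge 2$, where $b$ is a monic polynomial of degree $\gamma\ge 0$. Let $f(z,w)=(p(z),q(z,w))$. Write $q_z(w)=q(z,w)$ and $Q_z^n=q_{p^{n-1}(z)}\circ\cdots\circ q_{p(z)}\circ q_z$, so that $f^n(z,w)=(p^n(z),Q_z^n(w))$. Let $G_p(z)=\lim_{n\to\infty}\delta^{-n}\log^+|p^n(z)|$ (the Green function of $p$). For $\delta>d$, define $$\alpha=\max\Big\{\frac{n_j}{\delta-m_j}\;:\; z^{n_j}w^{m_j}\text{ is a monomial appearing in } q \text{ with nonzero coefficient}\Big\}\ \ (\ge 0).$$ *)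

theory Defs
  imports "HOL-Analysis.Analysis" "HOL-Computational_Algebra.Polynomial"
begin

definition logplus :: "real \<Rightarrow> real" where
  "logplus x = max 0 (ln x)"

text \<open>A polynomial q(z,w) in two variables is represented as a polynomial in w
  whose coefficients are polynomials in z. Evaluation q(z,w):\<close>
definition eval2 :: "complex poly poly \<Rightarrow> complex \<Rightarrow> complex \<Rightarrow> complex" where
  "eval2 q z w = poly (map_poly (\<lambda>a. poly a z) q) w"

text \<open>Fibre iterates Q_z^n = q_{p^{n-1}(z)} o ... o q_z.\<close>
fun Qiter :: "complex poly \<Rightarrow> complex poly poly \<Rightarrow> nat \<Rightarrow> complex \<Rightarrow> complex \<Rightarrow> complex" where
  "Qiter p q 0 z w = w"
| "Qiter p q (Suc n) z w = eval2 q ((poly p ^^ n) z) (Qiter p q n z w)"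

definition green :: "complex poly \<Rightarrow> complex \<Rightarrow> real" where
  "green p z = lim (\<lambda>n. logplus (cmod ((poly p ^^ n) z)) / real (degree p) ^ n)"

definition alpha_exp :: "complex poly \<Rightarrow> complex poly poly \<Rightarrow> real" where
  "alpha_exp p q = Max {real i / (real (degree p) - real j) | i j. coeff (coeff q j) i \<noteq> 0}"

end

theory Submission
  imports Defs
begin

(* Write L n = log+ |p^n(z)| and M n = log+ |Q_z^n(w)|.
   (1) For a monic polynomial p of degree delta, log+ |p(u)| = delta log+ |u| + O(1)
       uniformly in u, so L (n+1) = delta L n + O(1); the telescoping series of
       differences L (n+1)/delta^(n+1) - L n/delta^n converges geometrically,
       and L n / delta^n tends to the Green function G_p(z).
   (2) By definition of alpha every monomial z^i w^j of q satisfies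
       i <= alpha (delta - j).  Hence a monomial is bounded by
       exp (alpha delta L + j (M - alpha L)), and the excess
       F n = max 0 (M n - alpha L n) obeys F (n+1) <= B + d F n.
       Thus F n grows at most like d^n, and since d < delta, F n / delta^n -> 0.
   (3) log+ max (|p^n z|^alpha, |Q_z^n w|) = alpha L n + F n, so the normalised
       quantity tends to alpha G_p(z). *)

section \<open>The function log+\<close>

lemma logplus_nonneg: "0 \<le> logplus x"
  by (simp add: logplus_def)

lemma logplus_mono: "0 \<le> x \<Longrightarrow> x \<le> y \<Longrightarrow> logplus x \<le> logplus y"
  unfolding logplus_def by (cases "x = 0") (auto intro: max.coboundedI2)

lemma exp_logplus:
  assumes "0 \<le> x"
  shows "exp (logplus x) = max 1 x"
proof (cases "x = 0")
  case False
  then have "x > 0" using assms by simp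
  then show ?thesis
    by (cases "x \<ge> 1") (auto simp: logplus_def max_def)
qed (simp add: logplus_def)

lemma le_exp_logplus: "0 \<le> x \<Longrightarrow> x \<le> exp (logplus x)"
  by (simp add: exp_logplus)

lemma logplus_le:
  assumes "0 \<le> x" "x \<le> a * exp T" "1 \<le> a" "0 \<le> T"
  shows "logplus x \<le> ln a + T"
proof (cases "x = 0")
  case False
  then have "ln x \<le> ln (a * exp T)" using assms by simp
  also have "\<dots> = ln a + T" using assms by (simp add: ln_mult)
  finally show ?thesis using assms unfolding logplus_def by simp
qed (use assms in \<open>simp add: logplus_def\<close>)

lemma logplus_max: "0 \<le> x \<Longrightarrow> 0 \<le> y \<Longrightarrow> logplus (max x y) = max (logplus x) (logplus y)"
  by (metis logplus_mono max.absorb1 max.absorb2 nle_le)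

lemma logplus_powr:
  assumes "0 \<le> x" "0 \<le> a"
  shows "logplus (x powr a) = a * logplus x"
  using assms by (cases "x = 0") (auto simp: logplus_def ln_powr max_mult_distrib_left)

section \<open>Two lemmas on real sequences\<close>

text \<open>If L (n+1) = D L n + O(1) with D > 1, then L n / D^n converges: the successive
  differences are O(D^-n), so the telescoping series converges.\<close>
lemma quasi_linear_recursion_converges:
  fixes L :: "nat \<Rightarrow> real" and D K :: real
  assumes D1: "D > 1" and hK: "\<And>n. \<bar>L (Suc n) - D * L n\<bar> \<le> K"
  shows "convergent (\<lambda>n. L n / D ^ n)"
proof -
  define g where "g k = L (Suc k) / D ^ Suc k - L k / D ^ k" for k
  have g_bound: "norm (g k) \<le> (K / D) * (1 / D) ^ k" for k
  proof -
    have "g k = (L (Suc k) - D * L k) / D ^ Suc k"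
      using D1 unfolding g_def by (simp add: field_simps)
    then have "norm (g k) = \<bar>L (Suc k) - D * L k\<bar> / D ^ Suc k" using D1 by simp
    also have "\<dots> \<le> K / D ^ Suc k" using D1 hK[of k] by (intro divide_right_mono) auto
    also have "\<dots> = (K / D) * (1 / D) ^ k" by (simp add: field_simps)
    finally show ?thesis .
  qed
  have "summable (\<lambda>k. (K / D) * (1 / D) ^ k)"
    using D1 by (intro summable_mult summable_geometric) auto
  then have "summable g" by (rule summable_comparison_test[rotated]) (use g_bound in auto)
  then have "(\<lambda>n. L 0 + (\<Sum>k<n. g k)) \<longlonglongrightarrow> L 0 + suminf g"
    by (intro tendsto_add tendsto_const summable_LIMSEQ)
  moreover have "L 0 + (\<Sum>k<n. g k) = L n / D ^ n" for n
    unfolding g_def by (subst sum_lessThan_telescope) simp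
  ultimately show ?thesis by (auto simp: convergent_def)
qed

text \<open>A sequence with F (n+1) \<le> B + d F n, where B \<ge> 0 and d \<ge> 2, grows at most like d^n
  (the bound d \<ge> 2 makes F n + B a super-solution of the recursion F' (n+1) = d F' n).\<close>
lemma affine_recursion_growth:
  fixes F :: "nat \<Rightarrow> real" and B d :: real
  assumes B0: "B \<ge> 0" and d2: "d \<ge> 2" and rec: "\<And>n. F (Suc n) \<le> B + d * F n"
  shows "F n + B \<le> (F 0 + B) * d ^ n"
proof (induction n)
  case (Suc n)
  have "B * 2 \<le> B * d" using mult_left_mono[OF d2 B0] .
  then have "F (Suc n) + B \<le> d * (F n + B)" using rec[of n] by (simp add: algebra_simps)
  also have "\<dots> \<le> d * ((F 0 + B) * d ^ n)" using Suc d2 by (intro mult_left_mono) auto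
  finally show ?case by (simp add: algebra_simps)
qed simp

lemma excess_negligible:
  fixes L M :: "nat \<Rightarrow> real" and a C K D d :: real
  assumes a0: "0 \<le> a" and d2: "2 \<le> d" and dD: "d < D"
    and L_rec: "\<And>n. D * L n - K \<le> L (Suc n)"
    and M_rec: "\<And>n. M (Suc n) \<le> C + a * D * L n + d * max 0 (M n - a * L n)"
  shows "(\<lambda>n. max 0 (M n - a * L n) / D ^ n) \<longlonglongrightarrow> 0"
proof -
  define F where "F n = max 0 (M n - a * L n)" for n
  define B where "B = max 0 (C + a * K)"
  have D0: "D > 0" using d2 dD by simp
  have F_rec: "F (Suc n) \<le> B + d * F n" for n
  proof -
    have "a * (D * L n - K) \<le> a * L (Suc n)" using L_rec[of n] a0 by (rule mult_left_mono)
    then have "M (Suc n) - a * L (Suc n) \<le> B + d * F n"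
      using M_rec[of n] unfolding B_def F_def by (simp add: algebra_simps)
    moreover have "0 \<le> B + d * F n" using d2 by (simp add: B_def F_def)
    ultimately show ?thesis unfolding F_def by simp
  qed
  have F_bound: "F n \<le> (F 0 + B) * d ^ n" for n
    using affine_recursion_growth[of B d F n, OF _ d2 F_rec] by (simp add: B_def)
  show ?thesis unfolding F_def[symmetric]
  proof (rule tendsto_sandwich[of "\<lambda>_. 0" _ _ "\<lambda>n. (F 0 + B) * (d / D) ^ n"])
    show "\<forall>\<^sub>F n in sequentially. 0 \<le> F n / D ^ n" using D0 by (auto simp: F_def)
    show "\<forall>\<^sub>F n in sequentially. F n / D ^ n \<le> (F 0 + B) * (d / D) ^ n"
      using F_bound D0 by (auto simp: power_divide divide_right_mono)
    have "(\<lambda>n. (d / D) ^ n) \<longlonglongrightarrow> 0" using d2 dD by (intro LIMSEQ_power_zero) auto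
    then show "(\<lambda>n. (F 0 + B) * (d / D) ^ n) \<longlonglongrightarrow> 0"
      by (metis mult_zero_right tendsto_mult_left)
  qed simp
qed

section \<open>Estimates for polynomials\<close>

definition coeff_norm :: "complex poly \<Rightarrow> real" where
  "coeff_norm r = (\<Sum>k\<le>degree r. cmod (coeff r k))"

lemma coeff_norm_nonneg: "0 \<le> coeff_norm r"
  by (simp add: coeff_norm_def sum_nonneg)

lemma norm_poly_le: "cmod (poly r u) \<le> (\<Sum>k\<le>degree r. cmod (coeff r k) * cmod u ^ k)"
  unfolding poly_altdef by (rule order.trans[OF norm_sum]) (simp add: norm_mult norm_power)

lemma norm_poly_le_coeff_norm:
  "cmod (poly r u) \<le> coeff_norm r * max 1 (cmod u) ^ degree r"
proof -
  have "cmod (coeff r k) * cmod u ^ k \<le> cmod (coeff r k) * max 1 (cmod u) ^ degree r"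
    if "k \<le> degree r" for k
  proof -
    have "cmod u ^ k \<le> max 1 (cmod u) ^ k" by (simp add: power_mono)
    also have "\<dots> \<le> max 1 (cmod u) ^ degree r" using that by (simp add: power_increasing)
    finally show ?thesis by (simp add: mult_left_mono)
  qed
  then have "(\<Sum>k\<le>degree r. cmod (coeff r k) * cmod u ^ k)
               \<le> (\<Sum>k\<le>degree r. cmod (coeff r k) * max 1 (cmod u) ^ degree r)"
    by (intro sum_mono) auto
  with norm_poly_le[of r u] show ?thesis by (simp add: coeff_norm_def sum_distrib_right)
qed

lemma logplus_poly_upper:
  "logplus (cmod (poly r u)) \<le> ln (coeff_norm r + 1) + real (degree r) * logplus (cmod u)"
proof -
  have "cmod (poly r u) \<le> (coeff_norm r + 1) * max 1 (cmod u) ^ degree r"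
    using norm_poly_le_coeff_norm[of r u] by (rule order.trans) (simp add: mult_right_mono)
  also have "max 1 (cmod u) ^ degree r = exp (real (degree r) * logplus (cmod u))"
    by (simp add: exp_logplus exp_of_nat_mult)
  finally show ?thesis
    by (intro logplus_le) (auto simp: coeff_norm_nonneg logplus_nonneg)
qed

lemma monic_poly_lower:
  fixes r :: "complex poly"
  assumes monic: "lead_coeff r = 1" and deg: "degree r \<ge> 1"
    and large: "cmod u \<ge> 1" "cmod u \<ge> 2 * (\<Sum>k<degree r. cmod (coeff r k))"
  shows "cmod u ^ degree r / 2 \<le> cmod (poly r u)"
proof -
  define n where "n = degree r"
  define tail where "tail = (\<Sum>k<n. coeff r k * u ^ k)"
  have "poly r u = (\<Sum>k\<in>insert n {..<n}. coeff r k * u ^ k)"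
    unfolding poly_altdef n_def by (intro sum.cong) auto
  then have split: "poly r u = u ^ n + tail" using monic by (simp add: tail_def n_def)
  have "cmod tail \<le> (\<Sum>k<n. cmod (coeff r k) * cmod u ^ (n - 1))"
    unfolding tail_def
  proof (rule order.trans[OF norm_sum], rule sum_mono)
    fix k assume "k \<in> {..<n}"
    then have "cmod u ^ k \<le> cmod u ^ (n - 1)" using large by (intro power_increasing) auto
    then show "cmod (coeff r k * u ^ k) \<le> cmod (coeff r k) * cmod u ^ (n - 1)"
      by (simp add: norm_mult norm_power mult_left_mono)
  qed
  also have "\<dots> = (\<Sum>k<n. cmod (coeff r k)) * cmod u ^ (n - 1)"
    by (simp add: sum_distrib_right)
  also have "\<dots> \<le> (cmod u / 2) * cmod u ^ (n - 1)"
    using large by (intro mult_right_mono) (auto simp: n_def)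
  also have "\<dots> = cmod u ^ n / 2"
    using deg by (simp add: n_def power_eq_if)
  finally have "cmod tail \<le> cmod u ^ n / 2" .
  moreover have "cmod (u ^ n) - cmod tail \<le> cmod (poly r u)"
    unfolding split by (metis norm_diff_ineq)
  ultimately show ?thesis by (simp add: n_def norm_power)
qed

lemma logplus_monic_poly_lower:
  fixes r :: "complex poly"
  assumes monic: "lead_coeff r = 1" and deg: "degree r \<ge> 1"
  shows "\<exists>K. \<forall>u. real (degree r) * logplus (cmod u) - K \<le> logplus (cmod (poly r u))"
proof -
  define n where "n = degree r"
  define R where "R = max 2 (2 * (\<Sum>k<n. cmod (coeff r k)))"
  have R2: "R \<ge> 2" unfolding R_def by simp
  have "real n * logplus (cmod u) - (ln 2 + real n * ln R) \<le> logplus (cmod (poly r u))" for u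
  proof (cases "cmod u \<ge> R")
    case False
    then have "logplus (cmod u) \<le> logplus R" by (intro logplus_mono) auto
    also have "logplus R = ln R" using R2 unfolding logplus_def by simp
    finally have "real n * logplus (cmod u) \<le> real n * ln R" by (simp add: mult_left_mono)
    moreover have "0 \<le> ln (2::real)" by simp
    ultimately show ?thesis using logplus_nonneg[of "cmod (poly r u)"] by linarith
  next
    case True
    then have u2: "cmod u \<ge> 2" using R2 by linarith
    then have "u \<noteq> 0" by auto
    have low: "cmod u ^ n / 2 \<le> cmod (poly r u)"
      using monic_poly_lower[OF monic deg, of u] True R2 unfolding n_def R_def by auto
    have "cmod u ^ 1 \<le> cmod u ^ n" using u2 deg n_def by (intro power_increasing) auto
    then have un2: "2 \<le> cmod u ^ n" using u2 by simp
    have "real n * ln (cmod u) - ln 2 = ln (cmod u ^ n / 2)"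
      using u2 \<open>u \<noteq> 0\<close> by (simp add: ln_div ln_realpow)
    also have "\<dots> \<le> ln (cmod (poly r u))" using low un2 by (subst ln_le_cancel_iff) auto
    also have "\<dots> = logplus (cmod (poly r u))" using low un2 by (simp add: logplus_def)
    finally have "real n * ln (cmod u) - ln 2 \<le> logplus (cmod (poly r u))" .
    moreover have "logplus (cmod u) = ln (cmod u)" using u2 by (simp add: logplus_def)
    moreover have "0 \<le> real n * ln R" using R2 by simp
    ultimately show ?thesis by (simp only:)
  qed
  then show ?thesis unfolding n_def by blast
qed

lemma green_limit:
  fixes p :: "complex poly"
  assumes monic: "lead_coeff p = 1" and deg: "degree p \<ge> 2"
  shows "(\<lambda>n. logplus (cmod ((poly p ^^ n) z)) / real (degree p) ^ n) \<longlonglongrightarrow> green p z"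
proof -
  define L where "L n = logplus (cmod ((poly p ^^ n) z))" for n
  obtain K where K: "\<And>u. real (degree p) * logplus (cmod u) - K \<le> logplus (cmod (poly p u))"
    using logplus_monic_poly_lower[OF monic] deg by fastforce
  have "\<bar>L (Suc n) - real (degree p) * L n\<bar> \<le> max K (ln (coeff_norm p + 1))" for n
    using K[of "(poly p ^^ n) z"] logplus_poly_upper[of p "(poly p ^^ n) z"]
      max.cobounded1[of K "ln (coeff_norm p + 1)"] max.cobounded2[of "ln (coeff_norm p + 1)" K]
    unfolding L_def abs_le_iff by (simp only: funpow.simps comp_def) linarith
  then have "convergent (\<lambda>n. L n / real (degree p) ^ n)"
    using deg by (intro quasi_linear_recursion_converges) auto
  then show ?thesis unfolding green_def L_def by (simp add: convergent_LIMSEQ_iff)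
qed

section \<open>The exponent alpha and the fibre polynomial\<close>

text \<open>The monomials of q form a finite set, so alpha is a genuine maximum; since the
  leading monomial w^d b(z) occurs, alpha \<ge> 0, and every monomial z^i w^j of q satisfies
  the weighted degree bound i \<le> alpha (delta - j).\<close>
lemma alpha_exp_facts:
  fixes p :: "complex poly" and q :: "complex poly poly"
  assumes lq: "lead_coeff (lead_coeff q) = 1" and dpq: "degree p > degree q"
  shows "0 \<le> alpha_exp p q"
    and "\<And>i j. coeff (coeff q j) i \<noteq> 0 \<Longrightarrow> real i \<le> alpha_exp p q * (real (degree p) - real j)"
proof -
  define S where "S = {(i, j). coeff (coeff q j) i \<noteq> 0}"
  define N where "N = (\<Sum>j\<le>degree q. degree (coeff q j))"
  have j_le: "j \<le> degree q" if "(i, j) \<in> S" for i j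
    using that by (auto simp: S_def intro: le_degree)
  have "(i, j) \<in> {..N} \<times> {..degree q}" if ij: "(i, j) \<in> S" for i j
  proof -
    have "i \<le> degree (coeff q j)" using ij by (auto simp: S_def intro: le_degree)
    also have "\<dots> \<le> N" unfolding N_def using j_le[OF ij] by (intro member_le_sum) auto
    finally show ?thesis using j_le[OF ij] by simp
  qed
  then have "S \<subseteq> {..N} \<times> {..degree q}" by auto
  then have "finite S" by (rule finite_subset) auto
  moreover have "{real i / (real (degree p) - real j) | i j. coeff (coeff q j) i \<noteq> 0}
      = (\<lambda>(i, j). real i / (real (degree p) - real j)) ` S"
    by (auto simp: S_def)
  ultimately have le: "real i / (real (degree p) - real j) \<le> alpha_exp p q"
    if "coeff (coeff q j) i \<noteq> 0" for i j
    unfolding alpha_exp_def using that by (intro Max_ge) (auto simp: S_def)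
  have pos: "real j < real (degree p)" if "coeff (coeff q j) i \<noteq> 0" for i j
    using j_le[of i j] that dpq by (auto simp: S_def)
  have "coeff (coeff q (degree q)) (degree (coeff q (degree q))) \<noteq> 0" using lq by simp
  from le[OF this] pos[OF this] show "0 \<le> alpha_exp p q"
    by (smt (verit) divide_nonneg_pos of_nat_0_le_iff)
  fix i j assume "coeff (coeff q j) i \<noteq> 0"
  from le[OF this] pos[OF this]
  show "real i \<le> alpha_exp p q * (real (degree p) - real j)"
    by (simp add: pos_divide_le_eq)
qed

lemma monomial_exponent_bound:
  fixes a D L M :: real and i j d :: nat
  assumes "0 \<le> L" and "real i \<le> a * (D - real j)" and "j \<le> d"
  shows "real i * L + real j * M \<le> a * D * L + real d * max 0 (M - a * L)"
proof -
  have "real i * L \<le> a * (D - real j) * L" using assms by (intro mult_right_mono)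
  moreover have "real j * (M - a * L) \<le> real d * max 0 (M - a * L)"
  proof -
    have "real j * (M - a * L) \<le> real j * max 0 (M - a * L)"
      by (intro mult_left_mono) auto
    also have "\<dots> \<le> real d * max 0 (M - a * L)"
      using assms(3) by (intro mult_right_mono) auto
    finally show ?thesis .
  qed
  ultimately show ?thesis by (simp add: algebra_simps)
qed

definition coeff_norm2 :: "complex poly poly \<Rightarrow> real" where
  "coeff_norm2 q = (\<Sum>j\<le>degree q. coeff_norm (coeff q j))"

lemma eval2_altdef: "eval2 q u v = (\<Sum>j\<le>degree q. poly (coeff q j) u * v ^ j)"
proof -
  define f where "f = map_poly (\<lambda>b. poly b u) q"
  have "f = (\<Sum>j\<le>degree q. monom (coeff f j) j)"
    unfolding f_def by (rule poly_as_sum_of_monoms'[symmetric]) (rule map_poly_degree_leq)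
  then have "poly f v = poly (\<Sum>j\<le>degree q. monom (coeff f j) j) v" by (rule arg_cong)
  then show ?thesis by (simp add: eval2_def f_def[symmetric] poly_sum poly_monom)
    (simp add: f_def coeff_map_poly)
qed

lemma logplus_eval2_bound:
  fixes q :: "complex poly poly" and u v :: complex and a D :: real
  assumes "0 \<le> a" and "0 \<le> D"
    and weighted: "\<And>i j. coeff (coeff q j) i \<noteq> 0 \<Longrightarrow> real i \<le> a * (D - real j)"
  defines "L \<equiv> logplus (cmod u)" and "M \<equiv> logplus (cmod v)"
  shows "logplus (cmod (eval2 q u v))
           \<le> ln (coeff_norm2 q + 1) + (a * D * L + real (degree q) * max 0 (M - a * L))"
proof -
  define T where "T = a * D * L + real (degree q) * max 0 (M - a * L)"
  have monomial: "cmod (coeff (coeff q j) i) * (cmod u ^ i * cmod v ^ j)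
                    \<le> cmod (coeff (coeff q j) i) * exp T" if "j \<le> degree q" for i j
  proof (cases "coeff (coeff q j) i = 0")
    case False
    have "cmod u ^ i * cmod v ^ j \<le> exp L ^ i * exp M ^ j"
      unfolding L_def M_def by (intro mult_mono power_mono le_exp_logplus) auto
    also have "\<dots> = exp (real i * L + real j * M)" by (simp add: exp_add exp_of_nat_mult)
    also have "\<dots> \<le> exp T" unfolding T_def
      using monomial_exponent_bound[OF _ weighted[OF False] that] by (simp add: L_def logplus_nonneg)
    finally show ?thesis by (intro mult_left_mono) auto
  qed simp
  have "cmod (eval2 q u v) \<le> (\<Sum>j\<le>degree q. cmod (poly (coeff q j) u) * cmod v ^ j)"
    unfolding eval2_altdef by (rule order.trans[OF norm_sum]) (simp add: norm_mult norm_power)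
  also have "\<dots> \<le> (\<Sum>j\<le>degree q. \<Sum>i\<le>degree (coeff q j).
                     cmod (coeff (coeff q j) i) * (cmod u ^ i * cmod v ^ j))"
    by (intro sum_mono order.trans[OF mult_right_mono[OF norm_poly_le]])
       (auto simp: sum_distrib_right mult.assoc)
  also have "\<dots> \<le> (\<Sum>j\<le>degree q. \<Sum>i\<le>degree (coeff q j). cmod (coeff (coeff q j) i) * exp T)"
    by (intro sum_mono monomial) auto
  also have "\<dots> = coeff_norm2 q * exp T"
    by (simp add: coeff_norm2_def coeff_norm_def sum_distrib_right)
  also have "\<dots> \<le> (coeff_norm2 q + 1) * exp T" by simp
  finally show ?thesis unfolding T_def[symmetric]
    using assms(1,2) by (intro logplus_le)
      (auto simp: T_def L_def coeff_norm2_def coeff_norm_nonneg sum_nonneg logplus_nonneg)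
qed

lemma logplus_eval2_alpha_bound:
  fixes p :: "complex poly" and q :: "complex poly poly"
  assumes "lead_coeff (lead_coeff q) = 1" and "degree p > degree q"
  defines "a \<equiv> alpha_exp p q"
  shows "logplus (cmod (eval2 q u v))
           \<le> ln (coeff_norm2 q + 1) + a * real (degree p) * logplus (cmod u)
              + real (degree q) * max 0 (logplus (cmod v) - a * logplus (cmod u))"
  using logplus_eval2_bound[where q = q and D = "real (degree p)",
      OF alpha_exp_facts(1)[OF assms(1,2)] _ alpha_exp_facts(2)[OF assms(1,2)]]
  unfolding a_def by (simp add: add.assoc)

lemma logplus_max_powr:
  assumes "0 \<le> x" "0 \<le> y" "0 \<le> a"
  shows "logplus (max (x powr a) y) = a * logplus x + max 0 (logplus y - a * logplus x)"
proof -
  have "logplus (max (x powr a) y) = max (a * logplus x) (logplus y)"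
    using assms by (simp add: logplus_max logplus_powr)
  then show ?thesis by (simp add: max_def)
qed

theorem corollary4p2:
  fixes p :: "complex poly" and q :: "complex poly poly" and z w :: complex
  assumes "lead_coeff p = 1" and "degree p \<ge> 2"
    and "degree q \<ge> 2" and "lead_coeff (lead_coeff q) = 1"
    and "degree p > degree q"
  shows "(\<lambda>n. logplus (max (cmod ((poly p ^^ n) z) powr alpha_exp p q) (cmod (Qiter p q n z w)))
             / real (degree p) ^ n)
         \<longlonglongrightarrow> alpha_exp p q * green p z"
proof -
  define \<delta> where "\<delta> = real (degree p)"
  define a where "a = alpha_exp p q"
  define L where "L n = logplus (cmod ((poly p ^^ n) z))" for n
  define M where "M n = logplus (cmod (Qiter p q n z w))" for n
  obtain K where K: "\<And>u. \<delta> * logplus (cmod u) - K \<le> logplus (cmod (poly p u))"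
    using logplus_monic_poly_lower[OF assms(1)] assms(2) unfolding \<delta>_def by fastforce
  have L_rec: "\<delta> * L n - K \<le> L (Suc n)" for n
    unfolding L_def using K by simp
  have M_rec: "M (Suc n) \<le> ln (coeff_norm2 q + 1) + a * \<delta> * L n
                             + real (degree q) * max 0 (M n - a * L n)" for n
    using logplus_eval2_alpha_bound[OF assms(4,5)] unfolding M_def L_def a_def \<delta>_def by simp
  have excess: "(\<lambda>n. max 0 (M n - a * L n) / \<delta> ^ n) \<longlonglongrightarrow> 0"
    using alpha_exp_facts(1)[OF assms(4,5)] assms(3,5)
    by (intro excess_negligible[where L = L and M = M, OF _ _ _ L_rec M_rec]) (auto simp: a_def \<delta>_def)
  have base: "(\<lambda>n. a * (L n / \<delta> ^ n)) \<longlonglongrightarrow> a * green p z"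
    using green_limit[OF assms(1,2)] unfolding L_def \<delta>_def by (rule tendsto_mult_left)
  have "logplus (max (cmod ((poly p ^^ n) z) powr a) (cmod (Qiter p q n z w))) / \<delta> ^ n
          = a * (L n / \<delta> ^ n) + max 0 (M n - a * L n) / \<delta> ^ n" for n
    using alpha_exp_facts(1)[OF assms(4,5)] unfolding L_def M_def a_def
    by (simp add: logplus_max_powr add_divide_distrib)
  then show ?thesis
    using tendsto_add[OF base excess] unfolding a_def \<delta>_def by simp
qed

end
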